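(* For every $n\ge3$, the toric ideal $I_{\mathbb{Z}_2,n}$ is generated by binomials of degree two.
   Context: For a finite abelian group $G$ (written additively) and integer $n\ge2$, $I_{G,n}$ denotes the kernel of the $\mathbb{C}$-algebra homomorphism $$\mathbb{C}[q_{g_1,\dots,g_n}: g_1,\dots,g_n\in G]\to\mathbb{C}[a^{(i)}_g: g\in G,\ i=1,\dots,n+1],\qquad q_{g_1,\dots,g_n}\mapsto a^{(1)}_{g_1}a^{(2)}_{g_2}\cdots a^{(n)}_{g_n}\,a^{(n+1)}_{g_1+\cdots+g_n}.$$ *)

theory Defs
  imports Complex_Main "HOL-Library.Poly_Mapping" "HOL-Library.Numeral_Type"
begin

text \<open>Multivariate polynomials over the complex numbers in variables of type 'v:
  finitely supported maps from monomials (exponent vectors 'v =>0 nat) to coefficients.\<close>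
type_synonym 'v cpoly = "('v \<Rightarrow>\<^sub>0 nat) \<Rightarrow>\<^sub>0 complex"

definition monom :: "('v \<Rightarrow>\<^sub>0 nat) \<Rightarrow> 'v cpoly" where
  "monom \<alpha> = Poly_Mapping.single \<alpha> 1"

definition Var :: "'v \<Rightarrow> 'v cpoly" where
  "Var v = monom (Poly_Mapping.single v 1)"

definition monom_deg :: "('v \<Rightarrow>\<^sub>0 nat) \<Rightarrow> nat" where
  "monom_deg \<alpha> = (\<Sum>v\<in>Poly_Mapping.keys \<alpha>. Poly_Mapping.lookup \<alpha> v)"

text \<open>The variables q_(g_1,...,g_n) are indexed by lists of length n over the group 'g.
  The polynomial ring C[q_g : g in G^n] is the set of polynomials only using such variables.\<close>
definition in_qring :: "nat \<Rightarrow> ('g list) cpoly \<Rightarrow> bool" where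
  "in_qring n p \<longleftrightarrow> (\<forall>m\<in>Poly_Mapping.keys p. \<forall>v\<in>Poly_Mapping.keys m. length v = n)"

text \<open>Image of q_(g_1..g_n): a^(1)_(g_1) ... a^(n)_(g_n) a^(n+1)_(g_1+...+g_n);
  the variable a^(i)_g is Var (i, g).\<close>
definition toric_image :: "nat \<Rightarrow> ('g::ab_group_add) list \<Rightarrow> (nat \<times> 'g) cpoly" where
  "toric_image n g = (\<Prod>i<n. Var (i + 1, g ! i)) * Var (n + 1, sum_list g)"

definition toric_hom :: "nat \<Rightarrow> ('g::ab_group_add) list cpoly \<Rightarrow> (nat \<times> 'g) cpoly" where
  "toric_hom n p = (\<Sum>m\<in>Poly_Mapping.keys p. Poly_Mapping.single 0 (Poly_Mapping.lookup p m) *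
                      (\<Prod>v\<in>Poly_Mapping.keys m. toric_image n v ^ Poly_Mapping.lookup m v))"

definition toric_ideal :: "nat \<Rightarrow> ('g::{finite,ab_group_add}) list cpoly set" where
  "toric_ideal n = {p. in_qring n p \<and> toric_hom n p = 0}"

definition qideal_gen :: "nat \<Rightarrow> ('g list) cpoly set \<Rightarrow> ('g list) cpoly set" where
  "qideal_gen n S = {p. \<exists>F r. finite F \<and> F \<subseteq> S \<and> (\<forall>s\<in>F. in_qring n (r s))
                          \<and> p = (\<Sum>s\<in>F. r s * s)}"

definition deg2_binomial :: "nat \<Rightarrow> ('g list) cpoly \<Rightarrow> bool" where
  "deg2_binomial n b \<longleftrightarrow> (\<exists>\<alpha> \<beta>. (\<forall>v\<in>Poly_Mapping.keys \<alpha>. length v = n) \<and> (\<forall>v\<in>Poly_Mapping.keys \<beta>. length v = n)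
       \<and> monom_deg \<alpha> = 2 \<and> monom_deg \<beta> = 2 \<and> b = monom \<alpha> - monom \<beta>)"

end

theory Submission
  imports Defs
begin

text \<open>
  Write a variable q_v of the q-ring through its augmented vector
  (v_1, ..., v_n, v_1 + ... + v_n); the image of a monomial q^\<alpha> is then determined by its
  column counts: for each coordinate l and group element c, the number of factors of q^\<alpha>
  whose l-th augmented coordinate is c. As for every monomial map, the kernel is spanned
  by binomials q^\<alpha> - q^\<beta> with equal column counts.

  Over Z/2, take factors a of q^\<alpha> and b of q^\<beta>. Counting agreements with a on the
  coordinates D where a and b differ shows that some factor v of one side agrees with the
  factor of the other side in two coordinates i, k of D. Flipping i and k in both a and v
  (or in b and v) is a degree-two move that preserves the column counts and brings a and b
  two coordinates closer. Augmented vectors never differ in exactly one coordinate, so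
  repeating the move produces a common factor, which is cancelled before inducting on the
  degree. The argument works for every n.
\<close>

section \<open>The toric map on monomials\<close>

lemma prod_single_one:
  "finite A \<Longrightarrow> (\<Prod>i\<in>A. Poly_Mapping.single (f i) (1::'b::comm_semiring_1)) = Poly_Mapping.single (\<Sum>i\<in>A. f i) 1"
  by (induction A rule: finite_induct) (simp_all add: mult_single)

lemma power_single_one:
  "Poly_Mapping.single a (1::'b::comm_semiring_1) ^ k = Poly_Mapping.single (\<Sum>j<k. a) 1"
  by (induction k) (simp_all add: mult_single add.commute)

lemma sum_single_lookup:
  "(\<Sum>k\<in>Poly_Mapping.keys p. Poly_Mapping.single k (Poly_Mapping.lookup p k)) = p"
  by (rule poly_mapping_eqI)
    (simp add: lookup_sum lookup_single when_def in_keys_iff sum.delta' split: if_splits)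

lemma keys_add_nat:
  "Poly_Mapping.keys (\<alpha> + \<beta> :: 'a \<Rightarrow>\<^sub>0 nat) = Poly_Mapping.keys \<alpha> \<union> Poly_Mapping.keys \<beta>"
  by (auto simp: in_keys_iff lookup_add)

lemma single_add_diff_cancel:
  "c \<in> Poly_Mapping.keys \<alpha> \<Longrightarrow> Poly_Mapping.single c 1 + (\<alpha> - Poly_Mapping.single c 1) = (\<alpha> :: 'a \<Rightarrow>\<^sub>0 nat)"
  by (rule poly_mapping_eqI) (auto simp: lookup_add lookup_minus lookup_single when_def in_keys_iff)

lemma monom_add: "monom (\<alpha> + \<beta>) = monom \<alpha> * monom \<beta>"
  by (simp add: monom_def mult_single)

text \<open>aug n v l is coordinate l (counted from 0, l \<le> n) of the augmented vector
  (v_1, ..., v_n, v_1 + ... + v_n); the image of q_v has the factor a^(l+1) indexed by it.\<close>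
definition aug :: "nat \<Rightarrow> ('g::ab_group_add) list \<Rightarrow> nat \<Rightarrow> 'g" where
  "aug n v l = (if l < n then v ! l else sum_list v)"

definition image_exp :: "nat \<Rightarrow> ('g::ab_group_add) list \<Rightarrow> (nat \<times> 'g) \<Rightarrow>\<^sub>0 nat" where
  "image_exp n v = (\<Sum>l\<le>n. Poly_Mapping.single (Suc l, aug n v l) 1)"

definition toric_exp :: "nat \<Rightarrow> (('g::ab_group_add) list \<Rightarrow>\<^sub>0 nat) \<Rightarrow> (nat \<times> 'g) \<Rightarrow>\<^sub>0 nat" where
  "toric_exp n \<alpha> = (\<Sum>v\<in>Poly_Mapping.keys \<alpha>. \<Sum>j<Poly_Mapping.lookup \<alpha> v. image_exp n v)"

lemma toric_image_eq_monom: "toric_image n v = monom (image_exp n v)"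
proof -
  have "(\<Prod>i<n. Var (i + 1, v ! i)) = monom (\<Sum>i<n. Poly_Mapping.single (Suc i, v ! i) 1)"
    unfolding Var_def monom_def by (simp add: prod_single_one)
  moreover have "image_exp n v =
      (\<Sum>i<n. Poly_Mapping.single (Suc i, v ! i) 1) + Poly_Mapping.single (Suc n, sum_list v) 1"
    unfolding image_exp_def by (simp add: lessThan_Suc_atMost[symmetric] aug_def)
  ultimately show ?thesis
    unfolding toric_image_def by (simp add: Var_def monom_add)
qed

lemma toric_hom_eq:
  "toric_hom n p =
     (\<Sum>\<alpha>\<in>Poly_Mapping.keys p. Poly_Mapping.single (toric_exp n \<alpha>) (Poly_Mapping.lookup p \<alpha>))"
proof -
  have prod_eq: "(\<Prod>v\<in>Poly_Mapping.keys \<alpha>. toric_image n v ^ Poly_Mapping.lookup \<alpha> v) =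
      monom (toric_exp n \<alpha>)" for \<alpha>
    unfolding toric_image_eq_monom monom_def power_single_one toric_exp_def
    by (simp add: prod_single_one)
  show ?thesis
    unfolding toric_hom_def prod_eq by (simp add: monom_def mult_single)
qed

lemma lookup_toric_exp:
  assumes "finite K" "Poly_Mapping.keys \<alpha> \<subseteq> K"
  shows "Poly_Mapping.lookup (toric_exp n \<alpha>) x =
    (\<Sum>v\<in>K. Poly_Mapping.lookup \<alpha> v * Poly_Mapping.lookup (image_exp n v) x)"
  unfolding toric_exp_def lookup_sum
  by simp (rule sum.mono_neutral_left, use assms in \<open>auto simp: in_keys_iff\<close>)

lemma toric_exp_add: "toric_exp n (\<alpha> + \<beta>) = toric_exp n \<alpha> + toric_exp n \<beta>"
proof (rule poly_mapping_eqI)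
  fix x
  let ?K = "Poly_Mapping.keys \<alpha> \<union> Poly_Mapping.keys \<beta>"
  show "Poly_Mapping.lookup (toric_exp n (\<alpha> + \<beta>)) x = Poly_Mapping.lookup (toric_exp n \<alpha> + toric_exp n \<beta>) x"
    using keys_add[of \<alpha> \<beta>]
    by (simp add: lookup_add lookup_toric_exp[of ?K] algebra_simps sum.distrib)
qed

lemma toric_exp_single [simp]: "toric_exp n (Poly_Mapping.single v 1) = image_exp n v"
  by (simp add: toric_exp_def)

lemma toric_hom_single: "toric_hom n (Poly_Mapping.single \<alpha> c) = Poly_Mapping.single (toric_exp n \<alpha>) c"
  by (simp add: toric_hom_eq)

lemma toric_hom_monom: "toric_hom n (monom \<alpha>) = monom (toric_exp n \<alpha>)"
  by (simp add: monom_def toric_hom_single)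

lemma toric_hom_add: "toric_hom n (p + q) = toric_hom n p + toric_hom n q"
proof -
  let ?K = "Poly_Mapping.keys p \<union> Poly_Mapping.keys q"
  have expand: "toric_hom n r = (\<Sum>\<alpha>\<in>?K. Poly_Mapping.single (toric_exp n \<alpha>) (Poly_Mapping.lookup r \<alpha>))"
    if "Poly_Mapping.keys r \<subseteq> ?K" for r
    unfolding toric_hom_eq by (rule sum.mono_neutral_left) (use that in \<open>auto simp: in_keys_iff\<close>)
  show ?thesis
    using keys_add[of p q]
    by (simp add: expand lookup_add single_add sum.distrib)
qed

lemma toric_hom_uminus: "toric_hom n (- p) = - toric_hom n p"
  by (simp add: toric_hom_eq keys_minus single_uminus sum_negf)

lemma toric_hom_diff: "toric_hom n (p - q) = toric_hom n p - toric_hom n q"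
  using toric_hom_add[of n p "- q"] by (simp add: toric_hom_uminus)

lemma toric_hom_zero [simp]: "toric_hom n 0 = 0"
  by (simp add: toric_hom_eq)

lemma toric_hom_sum: "toric_hom n (\<Sum>x\<in>X. f x) = (\<Sum>x\<in>X. toric_hom n (f x))"
  by (induction X rule: infinite_finite_induct) (simp_all add: toric_hom_add)

lemma toric_hom_mult: "toric_hom n (p * q) = toric_hom n p * toric_hom n q"
proof -
  let ?s = "\<lambda>p \<alpha>. Poly_Mapping.single \<alpha> (Poly_Mapping.lookup p \<alpha>)"
  have "p * q = (\<Sum>\<alpha>\<in>Poly_Mapping.keys p. \<Sum>\<beta>\<in>Poly_Mapping.keys q. ?s p \<alpha> * ?s q \<beta>)"
    by (subst (1 2) sum_single_lookup[symmetric]) (rule sum_product)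
  then have "toric_hom n (p * q) =
      (\<Sum>\<alpha>\<in>Poly_Mapping.keys p. \<Sum>\<beta>\<in>Poly_Mapping.keys q.
         Poly_Mapping.single (toric_exp n \<alpha>) (Poly_Mapping.lookup p \<alpha>) *
         Poly_Mapping.single (toric_exp n \<beta>) (Poly_Mapping.lookup q \<beta>))"
    by (simp add: toric_hom_sum mult_single toric_hom_single toric_exp_add)
  also have "\<dots> = toric_hom n p * toric_hom n q"
    by (simp add: toric_hom_eq sum_product)
  finally show ?thesis .
qed

section \<open>Ideals of the q-ring\<close>

definition is_qmonom :: "nat \<Rightarrow> ('g list \<Rightarrow>\<^sub>0 nat) \<Rightarrow> bool" where
  "is_qmonom n \<alpha> \<longleftrightarrow> (\<forall>v\<in>Poly_Mapping.keys \<alpha>. length v = n)"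

lemma is_qmonom_add: "is_qmonom n \<alpha> \<Longrightarrow> is_qmonom n \<beta> \<Longrightarrow> is_qmonom n (\<alpha> + \<beta>)"
  by (auto simp: is_qmonom_def keys_add_nat)

lemma is_qmonom_diff: "is_qmonom n \<alpha> \<Longrightarrow> is_qmonom n (\<alpha> - \<beta>)"
  by (auto simp: is_qmonom_def in_keys_iff lookup_minus)

lemma is_qmonom_single: "length v = n \<Longrightarrow> is_qmonom n (Poly_Mapping.single v k)"
  by (simp add: is_qmonom_def)

lemma in_qring_monom: "is_qmonom n \<alpha> \<Longrightarrow> in_qring n (monom \<alpha>)"
  by (simp add: in_qring_def is_qmonom_def monom_def)

lemma in_qring_zero [simp]: "in_qring n 0"
  by (simp add: in_qring_def)

lemma in_qring_const: "in_qring n (Poly_Mapping.single 0 c)"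
  by (simp add: in_qring_def)

lemma in_qring_add: "in_qring n p \<Longrightarrow> in_qring n q \<Longrightarrow> in_qring n (p + q)"
  using keys_add[of p q] unfolding in_qring_def by blast

lemma in_qring_uminus: "in_qring n p \<Longrightarrow> in_qring n (- p)"
  by (simp add: in_qring_def keys_minus)

lemma in_qring_mult: "in_qring n p \<Longrightarrow> in_qring n q \<Longrightarrow> in_qring n (p * q)"
  using keys_mult[of p q] unfolding in_qring_def by (fastforce simp: keys_add_nat)

lemma in_qring_sum: "(\<And>x. x \<in> X \<Longrightarrow> in_qring n (f x)) \<Longrightarrow> in_qring n (\<Sum>x\<in>X. f x)"
  by (induction X rule: infinite_finite_induct) (simp_all add: in_qring_add)

lemma qideal_gen_zero: "0 \<in> qideal_gen n S"
  unfolding qideal_gen_def by (intro CollectI exI[of _ "{}"]) simp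

lemma qideal_gen_base: "s \<in> S \<Longrightarrow> s \<in> qideal_gen n S"
  unfolding qideal_gen_def
  by (intro CollectI exI[of _ "{s}"] exI[of _ "\<lambda>_. 1"]) (simp add: in_qring_def)

lemma qideal_gen_add:
  assumes "p \<in> qideal_gen n S" "q \<in> qideal_gen n S"
  shows "p + q \<in> qideal_gen n S"
proof -
  obtain F1 r1 where F1: "finite F1" "F1 \<subseteq> S" "\<forall>s\<in>F1. in_qring n (r1 s)" "p = (\<Sum>s\<in>F1. r1 s * s)"
    using assms(1) unfolding qideal_gen_def by blast
  obtain F2 r2 where F2: "finite F2" "F2 \<subseteq> S" "\<forall>s\<in>F2. in_qring n (r2 s)" "q = (\<Sum>s\<in>F2. r2 s * s)"
    using assms(2) unfolding qideal_gen_def by blast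
  define r where "r s = (if s \<in> F1 then r1 s else 0) + (if s \<in> F2 then r2 s else 0)" for s
  have "(\<Sum>s\<in>F1 \<union> F2. r s * s) =
      (\<Sum>s\<in>F1 \<union> F2. if s \<in> F1 then r1 s * s else 0) + (\<Sum>s\<in>F1 \<union> F2. if s \<in> F2 then r2 s * s else 0)"
    unfolding sum.distrib[symmetric] by (rule sum.cong) (auto simp: r_def distrib_right)
  also have "\<dots> = p + q"
    using F1 F2 by (simp add: sum.If_cases Int_absorb1 Int_absorb2)
  finally have "p + q = (\<Sum>s\<in>F1 \<union> F2. r s * s)" by simp
  moreover have "\<forall>s\<in>F1 \<union> F2. in_qring n (r s)"
    using F1 F2 unfolding r_def by (auto intro!: in_qring_add)
  ultimately show ?thesis
    using F1 F2 unfolding qideal_gen_def by (intro CollectI exI[of _ "F1 \<union> F2"] exI[of _ r]) simp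
qed

lemma qideal_gen_mult:
  assumes "p \<in> qideal_gen n S" "in_qring n q"
  shows "q * p \<in> qideal_gen n S"
proof -
  obtain F r where F: "finite F" "F \<subseteq> S" "\<forall>s\<in>F. in_qring n (r s)" "p = (\<Sum>s\<in>F. r s * s)"
    using assms(1) unfolding qideal_gen_def by blast
  have "q * p = (\<Sum>s\<in>F. (q * r s) * s)"
    using F by (simp add: sum_distrib_left mult.assoc)
  moreover have "\<forall>s\<in>F. in_qring n (q * r s)"
    using F assms(2) by (auto intro: in_qring_mult)
  ultimately show ?thesis
    using F unfolding qideal_gen_def by (intro CollectI exI[of _ F] exI[of _ "\<lambda>s. q * r s"]) simp
qed

lemma qideal_gen_uminus: "p \<in> qideal_gen n S \<Longrightarrow> - p \<in> qideal_gen n S"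
  using qideal_gen_mult[of p n S "- 1"] by (simp add: in_qring_uminus in_qring_def)

lemma qideal_gen_subset_toric_ideal:
  assumes "S \<subseteq> toric_ideal n"
  shows "qideal_gen n S \<subseteq> toric_ideal n"
proof
  fix p assume "p \<in> qideal_gen n S"
  then obtain F r where F: "finite F" "F \<subseteq> S" "\<forall>s\<in>F. in_qring n (r s)" "p = (\<Sum>s\<in>F. r s * s)"
    unfolding qideal_gen_def by blast
  have S: "in_qring n s \<and> toric_hom n s = 0" if "s \<in> F" for s
    using that F(2) assms unfolding toric_ideal_def by blast
  have "in_qring n p"
    using F S by (auto intro!: in_qring_sum in_qring_mult)
  moreover have "toric_hom n p = 0"
    using S by (simp add: F(4) toric_hom_sum toric_hom_mult)
  ultimately show "p \<in> toric_ideal n"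
    unfolding toric_ideal_def by simp
qed

lemma binomial_in_toric_ideal:
  assumes "is_qmonom n \<alpha>" "is_qmonom n \<beta>" "toric_exp n \<alpha> = toric_exp n \<beta>"
  shows "monom \<alpha> - monom \<beta> \<in> toric_ideal n"
  using assms in_qring_add[OF in_qring_monom in_qring_uminus[OF in_qring_monom]]
  by (simp add: toric_ideal_def toric_hom_diff toric_hom_monom)

section \<open>Binomial generation of the kernel\<close>

lemma toric_kernel_exp_partner:
  assumes "toric_hom n p = 0" "\<alpha> \<in> Poly_Mapping.keys p"
  shows "\<exists>\<beta>\<in>Poly_Mapping.keys p. \<beta> \<noteq> \<alpha> \<and> toric_exp n \<beta> = toric_exp n \<alpha>"
proof (rule ccontr)
  assume no_partner: "\<not> ?thesis"
  have "Poly_Mapping.lookup (toric_hom n p) (toric_exp n \<alpha>) =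
      (\<Sum>\<beta>\<in>Poly_Mapping.keys p. if \<beta> = \<alpha> then Poly_Mapping.lookup p \<beta> else 0)"
    unfolding toric_hom_eq lookup_sum
    by (rule sum.cong) (use no_partner in \<open>auto simp: lookup_single when_def\<close>)
  also have "\<dots> \<noteq> 0"
    using assms(2) by (simp add: in_keys_iff)
  finally show False
    using assms(1) by simp
qed

lemma toric_ideal_subset_qideal_gen:
  fixes S :: "('g::{finite,ab_group_add}) list cpoly set"
  assumes binomials: "\<And>\<alpha> \<beta>. is_qmonom n \<alpha> \<Longrightarrow> is_qmonom n \<beta> \<Longrightarrow> toric_exp n \<alpha> = toric_exp n \<beta> \<Longrightarrow>
      monom \<alpha> - monom \<beta> \<in> qideal_gen n S"
  shows "toric_ideal n \<subseteq> qideal_gen n S"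
proof
  fix p :: "'g list cpoly" assume "p \<in> toric_ideal n"
  then have "in_qring n p" "toric_hom n p = 0"
    by (simp_all add: toric_ideal_def)
  then show "p \<in> qideal_gen n S"
  proof (induction "card (Poly_Mapping.keys p)" arbitrary: p rule: less_induct)
    case less
    show ?case
    proof (cases "p = 0")
      case True
      then show ?thesis by (simp add: qideal_gen_zero)
    next
      case False
      then obtain \<alpha> where \<alpha>: "\<alpha> \<in> Poly_Mapping.keys p"
        by (metis keys_eq_empty ex_in_conv)
      then obtain \<beta> where \<beta>: "\<beta> \<in> Poly_Mapping.keys p" "\<beta> \<noteq> \<alpha>" "toric_exp n \<beta> = toric_exp n \<alpha>"
        using toric_kernel_exp_partner less.prems(2) by blast
      define c where "c = Poly_Mapping.lookup p \<alpha>"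
      \<comment> \<open>move the coefficient of q^\<alpha> onto q^\<beta>, which has the same image\<close>
      define p' where "p' = p - Poly_Mapping.single \<alpha> c + Poly_Mapping.single \<beta> c"
      have keys_p': "Poly_Mapping.keys p' \<subseteq> Poly_Mapping.keys p - {\<alpha>}"
        using \<beta> by (auto simp: p'_def c_def in_keys_iff lookup_add lookup_minus lookup_single when_def
          split: if_splits)
      then have "card (Poly_Mapping.keys p') < card (Poly_Mapping.keys p)"
        using \<alpha> by (intro psubset_card_mono) auto
      moreover have "in_qring n p'"
        using less.prems(1) keys_p' unfolding in_qring_def by blast
      moreover have "toric_hom n p' = 0"
        using less.prems(2) \<beta>(3) by (simp add: p'_def toric_hom_add toric_hom_diff toric_hom_single)
      ultimately have "p' \<in> qideal_gen n S"
        using less.hyps by blast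
      moreover have "monom \<alpha> - monom \<beta> \<in> qideal_gen n S"
        using less.prems(1) \<alpha> \<beta> by (intro binomials) (auto simp: in_qring_def is_qmonom_def)
      then have "Poly_Mapping.single 0 c * (monom \<alpha> - monom \<beta>) \<in> qideal_gen n S"
        by (rule qideal_gen_mult) (rule in_qring_const)
      moreover have "p = p' + Poly_Mapping.single 0 c * (monom \<alpha> - monom \<beta>)"
        by (simp add: p'_def monom_def mult_single right_diff_distrib)
      ultimately show ?thesis
        by (metis qideal_gen_add)
    qed
  qed
qed

section \<open>Degree and distance read off from the toric exponent\<close>

lemma monom_deg_add: "monom_deg (\<alpha> + \<beta>) = monom_deg \<alpha> + monom_deg \<beta>"
proof -
  have expand: "monom_deg \<gamma> = (\<Sum>v\<in>Poly_Mapping.keys \<alpha> \<union> Poly_Mapping.keys \<beta>. Poly_Mapping.lookup \<gamma> v)"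
    if "Poly_Mapping.keys \<gamma> \<subseteq> Poly_Mapping.keys \<alpha> \<union> Poly_Mapping.keys \<beta>" for \<gamma>
    unfolding monom_deg_def by (rule sum.mono_neutral_left) (use that in \<open>auto simp: in_keys_iff\<close>)
  show ?thesis
    using keys_add[of \<alpha> \<beta>] by (simp add: expand lookup_add sum.distrib)
qed

lemma monom_deg_single [simp]: "monom_deg (Poly_Mapping.single v k) = k"
  by (simp add: monom_deg_def)

lemma monom_deg_eq_0_iff: "monom_deg \<alpha> = 0 \<longleftrightarrow> \<alpha> = 0"
  by (auto simp: monom_deg_def in_keys_iff poly_mapping_eqI)

lemma lookup_image_exp:
  assumes "l \<le> n"
  shows "Poly_Mapping.lookup (image_exp n v) (Suc l, c) = of_bool (aug n v l = c)"
proof -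
  have "Poly_Mapping.lookup (image_exp n v) (Suc l, c) =
      (\<Sum>j\<le>n. if j = l then of_bool (aug n v l = c) else 0)"
    unfolding image_exp_def lookup_sum by (rule sum.cong) (auto simp: lookup_single when_def)
  then show ?thesis
    using assms by simp
qed

lemma lookup_toric_exp_aug:
  assumes "l \<le> n"
  shows "Poly_Mapping.lookup (toric_exp n \<alpha>) (Suc l, c) =
    (\<Sum>v\<in>{v\<in>Poly_Mapping.keys \<alpha>. aug n v l = c}. Poly_Mapping.lookup \<alpha> v)"
  using assms by (simp add: lookup_toric_exp[of "Poly_Mapping.keys \<alpha>"] lookup_image_exp Int_def)

lemma monom_deg_eq_sum_toric_exp:
  fixes \<alpha> :: "('g::{finite,ab_group_add}) list \<Rightarrow>\<^sub>0 nat"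
  shows "monom_deg \<alpha> = (\<Sum>c\<in>UNIV. Poly_Mapping.lookup (toric_exp n \<alpha>) (Suc 0, c))"
  unfolding monom_deg_def lookup_toric_exp_aug[OF le0]
  by (rule sum.group[symmetric]) simp_all

lemma monom_deg_eq_if_toric_exp_eq:
  fixes \<alpha> \<beta> :: "('g::{finite,ab_group_add}) list \<Rightarrow>\<^sub>0 nat"
  shows "toric_exp n \<alpha> = toric_exp n \<beta> \<Longrightarrow> monom_deg \<alpha> = monom_deg \<beta>"
  by (simp add: monom_deg_eq_sum_toric_exp[of \<alpha> n] monom_deg_eq_sum_toric_exp[of \<beta> n])

definition aug_diff :: "nat \<Rightarrow> ('g::ab_group_add) list \<Rightarrow> 'g list \<Rightarrow> nat set" where
  "aug_diff n a b = {l\<in>{..n}. aug n a l \<noteq> aug n b l}"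

lemma aug_diff_commute: "aug_diff n a b = aug_diff n b a"
  by (auto simp: aug_diff_def)

lemma finite_aug_diff [simp]: "finite (aug_diff n a b)"
  by (simp add: aug_diff_def)

lemma aug_diff_empty_iff:
  assumes "length a = n" "length b = n"
  shows "aug_diff n a b = {} \<longleftrightarrow> a = b"
proof
  assume "aug_diff n a b = {}"
  then have "aug n a i = aug n b i" if "i < n" for i
    using that by (auto simp: aug_diff_def)
  then show "a = b"
    using assms by (intro nth_equalityI) (simp_all add: aug_def)
qed (simp add: aug_diff_def)

text \<open>Componentwise, aug n a - aug n b is again augmented, and an augmented vector cannot
  have exactly one nonzero coordinate.\<close>
lemma card_aug_diff_ne_1:
  assumes "length a = n" "length b = n"
  shows "card (aug_diff n a b) \<noteq> 1"
proof
  assume "card (aug_diff n a b) = 1"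
  then obtain l where l: "aug_diff n a b = {l}"
    by (auto simp: card_Suc_eq)
  then have eq: "aug n a j = aug n b j" if "j \<le> n" "j \<noteq> l" for j
    using that by (auto simp: aug_diff_def)
  have "l \<le> n" "aug n a l \<noteq> aug n b l"
    using l by (auto simp: aug_diff_def)
  show False
  proof (cases "l < n")
    case True
    have eq_nth: "a ! j = b ! j" if "j < n" "j \<noteq> l" for j
      using eq[of j] that by (simp add: aug_def)
    have "sum_list a - sum_list b = (\<Sum>j<n. a ! j - b ! j)"
      using assms by (simp add: sum_list_sum_nth atLeast0LessThan sum_subtractf)
    also have "\<dots> = (\<Sum>j<n. if j = l then a ! l - b ! l else 0)"
      by (rule sum.cong) (auto simp: eq_nth)
    also have "\<dots> = a ! l - b ! l"
      using True by simp
    finally show False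
      using eq[of n] True \<open>aug n a l \<noteq> aug n b l\<close> by (simp add: aug_def)
  next
    case False
    then have "a ! i = b ! i" if "i < n" for i
      using eq[of i] that \<open>l \<le> n\<close> by (simp add: aug_def)
    then have "a = b"
      using assms by (intro nth_equalityI) simp_all
    then show False
      using l by (simp add: aug_diff_def)
  qed
qed

lemma sum_toric_exp_agreements:
  assumes "D \<subseteq> {..n}"
  shows "(\<Sum>l\<in>D. Poly_Mapping.lookup (toric_exp n \<alpha>) (Suc l, aug n a l)) =
    (\<Sum>v\<in>Poly_Mapping.keys \<alpha>. Poly_Mapping.lookup \<alpha> v * card {l\<in>D. aug n v l = aug n a l})"
proof -
  have "finite D"
    using assms finite_subset by blast
  have "(\<Sum>l\<in>D. Poly_Mapping.lookup (toric_exp n \<alpha>) (Suc l, aug n a l)) =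
      (\<Sum>l\<in>D. \<Sum>v\<in>Poly_Mapping.keys \<alpha>. Poly_Mapping.lookup \<alpha> v * of_bool (aug n v l = aug n a l))"
    by (rule sum.cong) (use assms in \<open>auto simp: lookup_toric_exp[of "Poly_Mapping.keys \<alpha>"] lookup_image_exp\<close>)
  also have "\<dots> = (\<Sum>v\<in>Poly_Mapping.keys \<alpha>. Poly_Mapping.lookup \<alpha> v * card {l\<in>D. aug n v l = aug n a l})"
    by (subst sum.swap) (simp add: sum_distrib_left[symmetric] \<open>finite D\<close> Int_def)
  finally show ?thesis .
qed

section \<open>Quadric binomials\<close>

definition quadric_binomials :: "nat \<Rightarrow> ('g::ab_group_add) list cpoly set" where
  "quadric_binomials n = {monom \<alpha> - monom \<beta> | \<alpha> \<beta>. is_qmonom n \<alpha> \<and> is_qmonom n \<beta> \<and>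
     monom_deg \<alpha> = 2 \<and> monom_deg \<beta> = 2 \<and> toric_exp n \<alpha> = toric_exp n \<beta>}"

abbreviation quadric_equiv :: "nat \<Rightarrow> (('g::ab_group_add) list \<Rightarrow>\<^sub>0 nat) \<Rightarrow> ('g list \<Rightarrow>\<^sub>0 nat) \<Rightarrow> bool" where
  "quadric_equiv n \<alpha> \<beta> \<equiv> monom \<alpha> - monom \<beta> \<in> qideal_gen n (quadric_binomials n)"

lemma quadric_binomials_subset_toric_ideal:
  "(quadric_binomials n :: ('g::{finite,ab_group_add}) list cpoly set) \<subseteq> toric_ideal n"
  unfolding quadric_binomials_def using binomial_in_toric_ideal by blast

lemma quadric_equiv_sym: "quadric_equiv n \<alpha> \<beta> \<Longrightarrow> quadric_equiv n \<beta> \<alpha>"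
  using qideal_gen_uminus by fastforce

lemma quadric_equiv_trans: "quadric_equiv n \<alpha> \<beta> \<Longrightarrow> quadric_equiv n \<beta> \<gamma> \<Longrightarrow> quadric_equiv n \<alpha> \<gamma>"
  using qideal_gen_add by fastforce

lemma quadric_equiv_add:
  assumes "quadric_equiv n \<alpha> \<beta>" "is_qmonom n \<gamma>"
  shows "quadric_equiv n (\<gamma> + \<alpha>) (\<gamma> + \<beta>)"
  using qideal_gen_mult[OF assms(1) in_qring_monom[OF assms(2)]]
  by (simp add: monom_add right_diff_distrib)

lemma quadric_equiv_base:
  assumes "is_qmonom n \<alpha>" "is_qmonom n \<beta>" "monom_deg \<alpha> = 2" "monom_deg \<beta> = 2"
    "toric_exp n \<alpha> = toric_exp n \<beta>"
  shows "quadric_equiv n \<alpha> \<beta>"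
  using assms by (intro qideal_gen_base) (auto simp: quadric_binomials_def)

section \<open>Quadratic moves over Z/2\<close>

lemma exhaust_2: "(x::2) = 0 \<or> x = 1"
proof (cases x)
  case (of_int z)
  then have "z = 0 \<or> z = 1"
    by auto
  with of_int show ?thesis
    by auto
qed

lemma neq_2_iff: "(x::2) \<noteq> y \<longleftrightarrow> y = x + 1"
  using exhaust_2[of x] exhaust_2[of y] by auto

definition flip_pair :: "nat \<Rightarrow> nat \<Rightarrow> nat \<Rightarrow> 2 list \<Rightarrow> 2 list" where
  "flip_pair n i k a = map (\<lambda>j. if j = i \<or> j = k then a ! j + 1 else a ! j) [0..<n]"

lemma length_flip_pair [simp]: "length (flip_pair n i k a) = n"
  by (simp add: flip_pair_def)

text \<open>Flipping two coordinates of the augmented vector keeps it augmented: if both lie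
  among the first n, the sum changes by 1 + 1 = 0; otherwise one of them is the sum itself.\<close>
lemma aug_flip_pair:
  assumes "length a = n" "i \<noteq> k" "i \<le> n" "k \<le> n" "l \<le> n"
  shows "aug n (flip_pair n i k a) l = (if l = i \<or> l = k then aug n a l + 1 else aug n a l)"
proof (cases "l < n")
  case True
  then show ?thesis by (simp add: aug_def flip_pair_def)
next
  case False
  have "sum_list (flip_pair n i k a) = (\<Sum>j<n. a ! j + of_bool (j \<in> {i, k}))"
    unfolding flip_pair_def sum_list_sum_nth atLeast0LessThan by (intro sum.cong) auto
  also have "\<dots> = sum_list a + of_nat (card ({..<n} \<inter> {i, k}))"
    using assms(1) by (simp add: sum.distrib sum_list_sum_nth atLeast0LessThan Collect_disj_eq insert_commute)
  also have "of_nat (card ({..<n} \<inter> {i, k})) = (if n = i \<or> n = k then 1 else (0::2))"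
  proof (cases "n = i \<or> n = k")
    case True
    then have "{..<n} \<inter> {i, k} = (if n = i then {k} else {i})"
      using assms by auto
    then show ?thesis using True by simp
  next
    case False
    then have "{..<n} \<inter> {i, k} = {i, k}"
      using assms by auto
    then show ?thesis using False assms(2) by simp
  qed
  finally show ?thesis
    using False assms(5) by (auto simp: aug_def)
qed

lemma image_exp_flip_pair:
  assumes "length a = n" "length v = n" "i \<noteq> k" "i \<le> n" "k \<le> n"
    and "aug n a i \<noteq> aug n v i" "aug n a k \<noteq> aug n v k"
  shows "image_exp n (flip_pair n i k a) + image_exp n (flip_pair n i k v) = image_exp n a + image_exp n v"
proof -
  have swapped: "Poly_Mapping.single (Suc l, aug n (flip_pair n i k a) l) 1 +
      Poly_Mapping.single (Suc l, aug n (flip_pair n i k v) l) 1 =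
      Poly_Mapping.single (Suc l, aug n a l) 1 + Poly_Mapping.single (Suc l, aug n v l) (1::nat)"
    if "l \<le> n" for l
  proof (cases "l = i \<or> l = k")
    case True
    then have "aug n a l \<noteq> aug n v l"
      using assms(6,7) by blast
    then have "aug n a l + 1 = aug n v l" "aug n v l + 1 = aug n a l"
      by (simp_all add: neq_2_iff[symmetric] eq_commute)
    moreover have "aug n (flip_pair n i k a) l = aug n a l + 1" "aug n (flip_pair n i k v) l = aug n v l + 1"
      using True that assms(1-5) by (simp_all add: aug_flip_pair)
    ultimately show ?thesis
      by (simp add: add.commute)
  next
    case False
    then show ?thesis
      using that assms by (simp add: aug_flip_pair)
  qed
  show ?thesis
    unfolding image_exp_def sum.distrib[symmetric] by (rule sum.cong[OF refl]) (rule swapped, simp)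
qed

lemma aug_diff_flip_pair:
  assumes "length a = n" "i \<noteq> k" "i \<in> aug_diff n a b" "k \<in> aug_diff n a b"
  shows "aug_diff n (flip_pair n i k a) b = aug_diff n a b - {i, k}"
proof -
  have "i \<le> n" "k \<le> n"
    using assms(3,4) by (auto simp: aug_diff_def)
  moreover have "aug n a i + 1 = aug n b i" "aug n a k + 1 = aug n b k"
    using assms(3,4) neq_2_iff by (auto simp: aug_diff_def)
  ultimately show ?thesis
    using assms(1,2) by (auto simp: aug_diff_def aug_flip_pair split: if_split_asm)
qed

lemma obtain_two_elements:
  assumes "2 \<le> card A"
  obtains x y where "x \<in> A" "y \<in> A" "x \<noteq> y"
  using assms card_le_Suc0_iff_eq[of A] by (metis card.infinite not_less_eq_eq numeral_2_eq_2 zero_le)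

text \<open>Flipping coordinates i and k of two factors a and v that differ there just swaps their
  entries in those two columns, so q_a q_v - q_a' q_v' is a quadric binomial of the toric ideal.\<close>
lemma quadric_move_closer:
  fixes \<alpha> :: "2 list \<Rightarrow>\<^sub>0 nat"
  assumes \<alpha>: "is_qmonom n \<alpha>" and a: "a \<in> Poly_Mapping.keys \<alpha>" and v: "v \<in> Poly_Mapping.keys \<alpha>"
    and two: "2 \<le> card {l\<in>aug_diff n a b. aug n v l = aug n b l}"
  shows "\<exists>\<alpha>' a'. is_qmonom n \<alpha>' \<and> a' \<in> Poly_Mapping.keys \<alpha>' \<and> toric_exp n \<alpha>' = toric_exp n \<alpha> \<and>
    quadric_equiv n \<alpha> \<alpha>' \<and> card (aug_diff n a' b) < card (aug_diff n a b)"
proof -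
  obtain i k where ik: "i \<in> aug_diff n a b" "k \<in> aug_diff n a b" "i \<noteq> k"
    and vb: "aug n v i = aug n b i" "aug n v k = aug n b k"
    using two by (rule obtain_two_elements) blast
  then have av: "aug n a i \<noteq> aug n v i" "aug n a k \<noteq> aug n v k" "a \<noteq> v"
    by (auto simp: aug_diff_def)
  have len: "length a = n" "length v = n" and "i \<le> n" "k \<le> n"
    using \<alpha> a v ik by (auto simp: is_qmonom_def aug_diff_def)
  define a' v' where "a' = flip_pair n i k a" and "v' = flip_pair n i k v"
  define \<gamma> where "\<gamma> = \<alpha> - Poly_Mapping.single a 1 - Poly_Mapping.single v 1"
  define \<alpha>' where "\<alpha>' = \<gamma> + (Poly_Mapping.single a' 1 + Poly_Mapping.single v' 1)"
  have \<alpha>_eq: "\<alpha> = \<gamma> + (Poly_Mapping.single a 1 + Poly_Mapping.single v 1)"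
    unfolding \<gamma>_def using a v av(3)
    by (intro poly_mapping_eqI) (auto simp: lookup_add lookup_minus lookup_single when_def in_keys_iff)
  have \<gamma>: "is_qmonom n \<gamma>"
    unfolding \<gamma>_def by (intro is_qmonom_diff \<alpha>)
  have exp_eq: "toric_exp n (Poly_Mapping.single a' 1 + Poly_Mapping.single v' 1) =
      toric_exp n (Poly_Mapping.single a 1 + Poly_Mapping.single v 1)"
    unfolding a'_def v'_def toric_exp_add toric_exp_single
    using len ik(3) \<open>i \<le> n\<close> \<open>k \<le> n\<close> av(1,2) by (rule image_exp_flip_pair)
  have "quadric_equiv n (Poly_Mapping.single a 1 + Poly_Mapping.single v 1)
      (Poly_Mapping.single a' 1 + Poly_Mapping.single v' 1)"
    using len exp_eq
    by (intro quadric_equiv_base is_qmonom_add is_qmonom_single) (simp_all add: a'_def v'_def monom_deg_add)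
  then have "quadric_equiv n \<alpha> \<alpha>'"
    unfolding \<alpha>'_def by (subst \<alpha>_eq) (rule quadric_equiv_add[OF _ \<gamma>])
  moreover have "is_qmonom n \<alpha>'"
    unfolding \<alpha>'_def by (intro is_qmonom_add is_qmonom_single \<gamma>) (simp_all add: a'_def v'_def)
  moreover have "a' \<in> Poly_Mapping.keys \<alpha>'"
    by (simp add: \<alpha>'_def in_keys_iff lookup_add)
  moreover have "toric_exp n \<alpha>' = toric_exp n \<alpha>"
    by (subst \<alpha>_eq) (simp only: \<alpha>'_def toric_exp_add[of n \<gamma>] exp_eq)
  moreover have "card (aug_diff n a' b) < card (aug_diff n a b)"
    unfolding a'_def v'_def aug_diff_flip_pair[OF len(1) ik(3,1,2)]
    using ik(1) by (intro psubset_card_mono) auto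
  ultimately show ?thesis
    by blast
qed

lemma sum_agreements_lower:
  fixes \<alpha> :: "2 list \<Rightarrow>\<^sub>0 nat"
  assumes a: "a \<in> Poly_Mapping.keys \<alpha>"
    and few: "\<And>v. v \<in> Poly_Mapping.keys \<alpha> \<Longrightarrow> card {l\<in>aug_diff n a b. aug n v l = aug n b l} \<le> 1"
  shows "monom_deg \<alpha> * card (aug_diff n a b) <
    (\<Sum>v\<in>Poly_Mapping.keys \<alpha>. Poly_Mapping.lookup \<alpha> v * card {l\<in>aug_diff n a b. aug n v l = aug n a l}) +
    monom_deg \<alpha>"
proof -
  define D where "D = aug_diff n a b"
  define agr where "agr v = card {l\<in>D. aug n v l = aug n a l}" for v
  have bound: "card D \<le> agr v + 1" if "v \<in> Poly_Mapping.keys \<alpha>" for v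
  proof -
    have "{l\<in>D. aug n v l \<noteq> aug n a l} \<subseteq> {l\<in>D. aug n v l = aug n b l}"
      by (auto simp: D_def aug_diff_def neq_2_iff)
    then have "card {l\<in>D. aug n v l \<noteq> aug n a l} \<le> card {l\<in>D. aug n v l = aug n b l}"
      by (rule card_mono[rotated]) (simp add: D_def)
    also have "\<dots> \<le> 1"
      using few[OF that] by (simp add: D_def)
    finally have "card {l\<in>D. aug n v l \<noteq> aug n a l} \<le> 1" .
    moreover have "{l\<in>D. aug n v l = aug n a l} \<union> {l\<in>D. aug n v l \<noteq> aug n a l} = D"
      by blast
    then have "card D \<le> agr v + card {l\<in>D. aug n v l \<noteq> aug n a l}"
      unfolding agr_def using card_Un_le by metis
    ultimately show ?thesis
      by linarith
  qed
  have "Poly_Mapping.lookup \<alpha> v * card D \<le> Poly_Mapping.lookup \<alpha> v * (agr v + 1)"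
    if "v \<in> Poly_Mapping.keys \<alpha>" for v
    by (rule mult_le_mono2) (rule bound[OF that])
  moreover have "Poly_Mapping.lookup \<alpha> a * card D < Poly_Mapping.lookup \<alpha> a * (agr a + 1)"
    using a by (simp add: agr_def in_keys_iff)
  ultimately have "(\<Sum>v\<in>Poly_Mapping.keys \<alpha>. Poly_Mapping.lookup \<alpha> v * card D) <
      (\<Sum>v\<in>Poly_Mapping.keys \<alpha>. Poly_Mapping.lookup \<alpha> v * (agr v + 1))"
    using a by (intro sum_strict_mono_ex1) auto
  then show ?thesis
    by (simp add: D_def agr_def monom_deg_def sum_distrib_right sum.distrib)
qed

lemma sum_agreements_upper:
  assumes b: "b \<in> Poly_Mapping.keys \<beta>"
    and few: "\<And>v. v \<in> Poly_Mapping.keys \<beta> \<Longrightarrow> card {l\<in>aug_diff n a b. aug n v l = aug n a l} \<le> 1"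
  shows "(\<Sum>v\<in>Poly_Mapping.keys \<beta>. Poly_Mapping.lookup \<beta> v * card {l\<in>aug_diff n a b. aug n v l = aug n a l}) <
    monom_deg \<beta>"
  unfolding monom_deg_def
proof (rule sum_strict_mono_ex1)
  show "\<forall>v\<in>Poly_Mapping.keys \<beta>.
      Poly_Mapping.lookup \<beta> v * card {l\<in>aug_diff n a b. aug n v l = aug n a l} \<le> Poly_Mapping.lookup \<beta> v"
    using few by (simp add: mult_le_cancel1)
  have "{l\<in>aug_diff n a b. aug n b l = aug n a l} = {}"
    by (auto simp: aug_diff_def)
  then show "\<exists>v\<in>Poly_Mapping.keys \<beta>.
      Poly_Mapping.lookup \<beta> v * card {l\<in>aug_diff n a b. aug n v l = aug n a l} < Poly_Mapping.lookup \<beta> v"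
    using b by (intro bexI[of _ b]) (simp_all add: in_keys_iff)
qed simp

text \<open>Count, with multiplicities, the agreements of factors with a on the coordinates where
  a and b differ; equal column counts make the totals over both sides equal. If no factor
  agreed twice with the opposite one, each factor of \<alpha> would agree with a on all but at most one
  of these coordinates and each factor of \<beta> on at most one, which is only possible if there is
  at most one such coordinate.\<close>
lemma exists_factor_agreeing_twice:
  fixes \<alpha> \<beta> :: "2 list \<Rightarrow>\<^sub>0 nat"
  assumes "is_qmonom n \<alpha>" "is_qmonom n \<beta>" "toric_exp n \<alpha> = toric_exp n \<beta>"
    and a: "a \<in> Poly_Mapping.keys \<alpha>" and b: "b \<in> Poly_Mapping.keys \<beta>" and "a \<noteq> b"
  shows "(\<exists>v\<in>Poly_Mapping.keys \<alpha>. 2 \<le> card {l\<in>aug_diff n a b. aug n v l = aug n b l}) \<or>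
    (\<exists>v\<in>Poly_Mapping.keys \<beta>. 2 \<le> card {l\<in>aug_diff n b a. aug n v l = aug n a l})"
proof (rule ccontr)
  assume "\<not> ?thesis"
  then have few_\<alpha>: "\<And>v. v \<in> Poly_Mapping.keys \<alpha> \<Longrightarrow> card {l\<in>aug_diff n a b. aug n v l = aug n b l} \<le> 1"
    and few_\<beta>: "\<And>v. v \<in> Poly_Mapping.keys \<beta> \<Longrightarrow> card {l\<in>aug_diff n a b. aug n v l = aug n a l} \<le> 1"
    by (auto simp: aug_diff_commute[of n b a])
  have len: "length a = n" "length b = n"
    using assms by (auto simp: is_qmonom_def)
  have "card (aug_diff n a b) \<noteq> 0"
    using len \<open>a \<noteq> b\<close> by (simp add: aug_diff_empty_iff)
  with card_aug_diff_ne_1[OF len] have two: "2 \<le> card (aug_diff n a b)"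
    by linarith
  have D: "aug_diff n a b \<subseteq> {..n}"
    by (auto simp: aug_diff_def)
  have same_sum:
    "(\<Sum>v\<in>Poly_Mapping.keys \<alpha>. Poly_Mapping.lookup \<alpha> v * card {l\<in>aug_diff n a b. aug n v l = aug n a l}) =
     (\<Sum>v\<in>Poly_Mapping.keys \<beta>. Poly_Mapping.lookup \<beta> v * card {l\<in>aug_diff n a b. aug n v l = aug n a l})"
    using sum_toric_exp_agreements[OF D, of \<alpha> a] sum_toric_exp_agreements[OF D, of \<beta> a] assms(3)
    by simp
  have "monom_deg \<alpha> = monom_deg \<beta>"
    using assms(3) by (rule monom_deg_eq_if_toric_exp_eq)
  then have "monom_deg \<alpha> * card (aug_diff n a b) < monom_deg \<alpha> * 2"
    using sum_agreements_lower[OF a few_\<alpha>] sum_agreements_upper[OF b few_\<beta>] same_sum by linarith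
  with two show False
    by (meson leD mult_le_mono2)
qed

definition quadric_common_factor :: "nat \<Rightarrow> (('g::ab_group_add) list \<Rightarrow>\<^sub>0 nat) \<Rightarrow> ('g list \<Rightarrow>\<^sub>0 nat) \<Rightarrow> bool" where
  "quadric_common_factor n \<alpha> \<beta> \<longleftrightarrow> (\<exists>\<alpha>' \<beta>'. is_qmonom n \<alpha>' \<and> is_qmonom n \<beta>' \<and>
     toric_exp n \<alpha>' = toric_exp n \<alpha> \<and> toric_exp n \<beta>' = toric_exp n \<beta> \<and>
     quadric_equiv n \<alpha> \<alpha>' \<and> quadric_equiv n \<beta> \<beta>' \<and> Poly_Mapping.keys \<alpha>' \<inter> Poly_Mapping.keys \<beta>' \<noteq> {})"

lemma quadric_common_factor_sym: "quadric_common_factor n \<alpha> \<beta> \<Longrightarrow> quadric_common_factor n \<beta> \<alpha>"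
  unfolding quadric_common_factor_def by blast

lemma quadric_common_factorI:
  assumes "is_qmonom n \<alpha>" "is_qmonom n \<beta>" "c \<in> Poly_Mapping.keys \<alpha>" "c \<in> Poly_Mapping.keys \<beta>"
  shows "quadric_common_factor n \<alpha> \<beta>"
  unfolding quadric_common_factor_def using assms by (intro exI[of _ \<alpha>] exI[of _ \<beta>]) (auto simp: qideal_gen_zero)

lemma quadric_common_factor_move:
  assumes "quadric_common_factor n \<alpha>1 \<beta>" "quadric_equiv n \<alpha> \<alpha>1" "toric_exp n \<alpha>1 = toric_exp n \<alpha>"
  shows "quadric_common_factor n \<alpha> \<beta>"
  using assms unfolding quadric_common_factor_def by (metis quadric_equiv_trans)

lemma quadric_common_factor_exists:
  fixes \<alpha> \<beta> :: "2 list \<Rightarrow>\<^sub>0 nat"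
  assumes "is_qmonom n \<alpha>" "is_qmonom n \<beta>" "toric_exp n \<alpha> = toric_exp n \<beta>"
    and "a \<in> Poly_Mapping.keys \<alpha>" "b \<in> Poly_Mapping.keys \<beta>"
  shows "quadric_common_factor n \<alpha> \<beta>"
  using assms
proof (induction "card (aug_diff n a b)" arbitrary: \<alpha> \<beta> a b rule: less_induct)
  case less
  show ?case
  proof (cases "a = b")
    case True
    then show ?thesis
      using less.prems by (intro quadric_common_factorI) auto
  next
    case False
    from exists_factor_agreeing_twice[OF less.prems False] show ?thesis
    proof (elim disjE bexE)
      fix v assume "v \<in> Poly_Mapping.keys \<alpha>" "2 \<le> card {l\<in>aug_diff n a b. aug n v l = aug n b l}"
      from quadric_move_closer[OF less.prems(1,4) this] obtain \<alpha>1 a1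
        where \<alpha>1: "is_qmonom n \<alpha>1" "toric_exp n \<alpha>1 = toric_exp n \<alpha>" "quadric_equiv n \<alpha> \<alpha>1"
          and a1: "a1 \<in> Poly_Mapping.keys \<alpha>1" "card (aug_diff n a1 b) < card (aug_diff n a b)"
        by blast
      have "quadric_common_factor n \<alpha>1 \<beta>"
        using less.hyps[OF a1(2) \<alpha>1(1) less.prems(2) _ a1(1) less.prems(5)] \<alpha>1(2) less.prems(3) by simp
      with \<alpha>1 show ?thesis
        by (blast intro: quadric_common_factor_move)
    next
      fix v assume "v \<in> Poly_Mapping.keys \<beta>" "2 \<le> card {l\<in>aug_diff n b a. aug n v l = aug n a l}"
      from quadric_move_closer[OF less.prems(2,5) this] obtain \<beta>1 b1
        where \<beta>1: "is_qmonom n \<beta>1" "toric_exp n \<beta>1 = toric_exp n \<beta>" "quadric_equiv n \<beta> \<beta>1"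
          and b1: "b1 \<in> Poly_Mapping.keys \<beta>1" "card (aug_diff n a b1) < card (aug_diff n a b)"
        by (auto simp: aug_diff_commute[of n a])
      have "quadric_common_factor n \<alpha> \<beta>1"
        using less.hyps[OF b1(2) less.prems(1) \<beta>1(1) _ less.prems(4) b1(1)] \<beta>1(2) less.prems(3) by simp
      with \<beta>1 show ?thesis
        by (blast intro: quadric_common_factor_move quadric_common_factor_sym)
    qed
  qed
qed

lemma binomial_in_quadric_ideal:
  fixes \<alpha> \<beta> :: "2 list \<Rightarrow>\<^sub>0 nat"
  assumes "is_qmonom n \<alpha>" "is_qmonom n \<beta>" "toric_exp n \<alpha> = toric_exp n \<beta>"
  shows "quadric_equiv n \<alpha> \<beta>"
  using assms
proof (induction "monom_deg \<alpha>" arbitrary: \<alpha> \<beta> rule: less_induct)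
  case less
  have same_deg: "monom_deg \<alpha> = monom_deg \<beta>"
    using less.prems(3) by (rule monom_deg_eq_if_toric_exp_eq)
  show ?case
  proof (cases "\<alpha> = 0")
    case True
    with same_deg have "\<beta> = 0"
      by (metis monom_deg_eq_0_iff)
    with True show ?thesis
      by (simp add: qideal_gen_zero)
  next
    case False
    with same_deg obtain a b where "a \<in> Poly_Mapping.keys \<alpha>" "b \<in> Poly_Mapping.keys \<beta>"
      by (metis monom_deg_eq_0_iff keys_eq_empty ex_in_conv)
    with less.prems obtain \<alpha>' \<beta>' c
      where \<alpha>': "is_qmonom n \<alpha>'" "toric_exp n \<alpha>' = toric_exp n \<alpha>" "quadric_equiv n \<alpha> \<alpha>'"
        and \<beta>': "is_qmonom n \<beta>'" "toric_exp n \<beta>' = toric_exp n \<beta>" "quadric_equiv n \<beta> \<beta>'"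
        and c: "c \<in> Poly_Mapping.keys \<alpha>'" "c \<in> Poly_Mapping.keys \<beta>'"
      using quadric_common_factor_exists unfolding quadric_common_factor_def by blast
    define \<gamma> \<delta> where "\<gamma> = \<alpha>' - Poly_Mapping.single c 1" and "\<delta> = \<beta>' - Poly_Mapping.single c 1"
    have split: "\<alpha>' = Poly_Mapping.single c 1 + \<gamma>" "\<beta>' = Poly_Mapping.single c 1 + \<delta>"
      unfolding \<gamma>_def \<delta>_def using c by (simp_all only: single_add_diff_cancel)
    have "toric_exp n \<alpha>' = toric_exp n \<beta>'"
      using \<alpha>'(2) \<beta>'(2) less.prems(3) by simp
    then have "toric_exp n \<gamma> = toric_exp n \<delta>"
      unfolding split by (simp add: toric_exp_add)
    moreover have "monom_deg \<gamma> < monom_deg \<alpha>"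
      using monom_deg_eq_if_toric_exp_eq[OF \<alpha>'(2)] unfolding split(1) by (simp add: monom_deg_add)
    ultimately have "quadric_equiv n \<gamma> \<delta>"
      using less.hyps \<alpha>'(1) \<beta>'(1) by (simp add: \<gamma>_def \<delta>_def is_qmonom_diff)
    moreover have "length c = n"
      using \<alpha>'(1) c(1) by (simp add: is_qmonom_def)
    ultimately have "quadric_equiv n \<alpha>' \<beta>'"
      unfolding split by (intro quadric_equiv_add is_qmonom_single)
    then show ?thesis
      using \<alpha>'(3) \<beta>'(3) quadric_equiv_sym quadric_equiv_trans by blast
  qed
qed

theorem theorem5p2:
  fixes n :: nat
  assumes "n \<ge> 3"
  shows "\<exists>B. (\<forall>b\<in>B. deg2_binomial n b) \<and>
             (toric_ideal n :: (2 list) cpoly set) = qideal_gen n B"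
proof (intro exI conjI)
  show "\<forall>b\<in>quadric_binomials n. deg2_binomial n b"
    unfolding quadric_binomials_def deg2_binomial_def is_qmonom_def by blast
  show "(toric_ideal n :: 2 list cpoly set) = qideal_gen n (quadric_binomials n)"
  proof (rule antisym)
    show "(toric_ideal n :: 2 list cpoly set) \<subseteq> qideal_gen n (quadric_binomials n)"
      by (rule toric_ideal_subset_qideal_gen) (rule binomial_in_quadric_ideal)
    show "qideal_gen n (quadric_binomials n) \<subseteq> (toric_ideal n :: 2 list cpoly set)"
      by (rule qideal_gen_subset_toric_ideal) (rule quadric_binomials_subset_toric_ideal)
  qed
qed

end
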